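(* Let $\langle A,\to\rangle$ be a conditional algebra, and write $T=T_A$, with $u,v,w$ ranging over $\mathrm{Ul}(A)$ and $Y,Z$ over closed subsets of the Stone space $\mathrm{Ul}(A)$. Then: (A4) $a\to b\le c\to(a\to b)$ holds for all $a,b,c\in A$ iff for all $u,v,w,Y,Z$: $T(u,Y,v)$ and $T(v,Z,w)$ imply $T(u,Z,w)$; (A5) $a\wedge(a\to b)\le b$ holds for all $a,b$ iff $T(u,\{u\},u)$ for all $u$; (A6) $a\to b\le\neg b\to\neg a$ holds for all $a,b$ iff for all $u,v,Y$: $T(u,Y,v)$ implies there is $w\in Y$ with $T(u,\{v\},w)$; (A7) $\neg(a\to b)\le c\to\neg(a\to b)$ holds for all $a,b,c$ iff for all $u,v,w,Y,Z$: $T(u,Y,v)$ and $T(u,Z,w)$ imply $T(v,Z,w)$; (A8) $(1\to(\neg a\vee b))\wedge(b\to c)\le a\to c$ holds for all $a,b,c$ iff for all $u,v,Y,Z$: if $T(u,Y,v)$ and $T(u,\mathrm{Ul}(A))\cap Y\subseteq Z$, then $T(u,Z,v)$.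
   Context: A conditional algebra is $\langle A,\to\rangle$ with $A$ a Boolean algebra and $\to$ binary with $a\to1=1$, $(a\to b)\wedge(a\to c)=a\to(b\wedge c)$, $(a\vee b)\to c\le(a\to c)\wedge(b\to c)$. $\mathrm{Ul}(A)$ is the Stone space of ultrafilters; its closed sets are the $\varphi(F)=\{u:F\subseteq u\}$ for filters $F$ (including $F=A$, giving $\emptyset$). $D^{\to}_u(F)=\{b:\exists a\in F,\ a\to b\in u\}$; $T_A(u,Z,v)$ iff there is a filter $F$ with $Z=\varphi(F)$ and $D^{\to}_u(F)\subseteq v$; $T_A(u,Z)=\{v:T_A(u,Z,v)\}$. *)

theory Defs
  imports Main
begin

definition conditional_algebra :: "('a::boolean_algebra \<Rightarrow> 'a \<Rightarrow> 'a) \<Rightarrow> bool" where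
  "conditional_algebra imp \<longleftrightarrow>
     (\<forall>a. imp a top = top) \<and>
     (\<forall>a b c. inf (imp a b) (imp a c) = imp a (inf b c)) \<and>
     (\<forall>a b c. imp (sup a b) c \<le> inf (imp a c) (imp b c))"

text \<open>Filters of a Boolean algebra (the whole algebra counts as a filter).\<close>

definition is_filter :: "'a::boolean_algebra set \<Rightarrow> bool" where
  "is_filter F \<longleftrightarrow> top \<in> F \<and>
     (\<forall>a b. a \<in> F \<longrightarrow> a \<le> b \<longrightarrow> b \<in> F) \<and>
     (\<forall>a b. a \<in> F \<longrightarrow> b \<in> F \<longrightarrow> inf a b \<in> F)"

definition ultrafilter :: "'a::boolean_algebra set \<Rightarrow> bool" where
  "ultrafilter u \<longleftrightarrow> is_filter u \<and> bot \<notin> u \<and>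
     (\<forall>G. is_filter G \<and> bot \<notin> G \<and> u \<subseteq> G \<longrightarrow> G = u)"

definition Ul :: "'a::boolean_algebra set set" where
  "Ul = {u. ultrafilter u}"

definition phi :: "'a::boolean_algebra set \<Rightarrow> 'a set set" where
  "phi F = {u. ultrafilter u \<and> F \<subseteq> u}"

definition closed_Ul :: "'a::boolean_algebra set set \<Rightarrow> bool" where
  "closed_Ul Z \<longleftrightarrow> (\<exists>F. is_filter F \<and> Z = phi F)"

definition Dimp :: "('a::boolean_algebra \<Rightarrow> 'a \<Rightarrow> 'a) \<Rightarrow> 'a set \<Rightarrow> 'a set \<Rightarrow> 'a set" where
  "Dimp imp u F = {b. \<exists>a\<in>F. imp a b \<in> u}"

definition TA :: "('a::boolean_algebra \<Rightarrow> 'a \<Rightarrow> 'a) \<Rightarrow> 'a set \<Rightarrow> 'a set set \<Rightarrow> 'a set \<Rightarrow> bool" where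
  "TA imp u Z v \<longleftrightarrow> (\<exists>F. is_filter F \<and> Z = phi F \<and> Dimp imp u F \<subseteq> v)"

definition TAset :: "('a::boolean_algebra \<Rightarrow> 'a \<Rightarrow> 'a) \<Rightarrow> 'a set \<Rightarrow> 'a set set \<Rightarrow> 'a set set" where
  "TAset imp u Z = {v. ultrafilter v \<and> TA imp u Z v}"

end

theory Submission
  imports Defs
begin

(* Closed subsets of Ul(A) are exactly the sets phi F for filters F, and phi is injective on
   filters, so T(u, phi F, v) just says that D_u(F) is contained in v. Each axiom then yields its
   frame condition by a direct filter computation (for (A6) and (A8) through the join of two
   filters). Conversely, the ultrafilter theorem reduces each inequality to a statement about
   ultrafilters, and shows that c -> x lies in u iff x lies in every v with T(u, Z_c, v), where
   Z_c = phi (principal_filter c) is the clopen set of ultrafilters containing c; instantiating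
   the frame condition at these clopen sets recovers the axiom. *)

section \<open>Filters and ultrafilters of a Boolean algebra\<close>

lemma filter_top: "is_filter F \<Longrightarrow> top \<in> F"
  and filter_up: "is_filter F \<Longrightarrow> x \<in> F \<Longrightarrow> x \<le> y \<Longrightarrow> y \<in> F"
  and filter_inf: "is_filter F \<Longrightarrow> x \<in> F \<Longrightarrow> y \<in> F \<Longrightarrow> inf x y \<in> F"
  by (simp_all add: is_filter_def)

lemma filter_inf_iff: "is_filter F \<Longrightarrow> inf x y \<in> F \<longleftrightarrow> x \<in> F \<and> y \<in> F"
  by (meson filter_inf filter_up inf_le1 inf_le2)

definition principal_filter :: "'a::boolean_algebra \<Rightarrow> 'a set" where
  "principal_filter x = {y. x \<le> y}"

lemma mem_principal_filter [simp]: "y \<in> principal_filter x \<longleftrightarrow> x \<le> y"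
  by (simp add: principal_filter_def)

lemma is_filter_principal_filter: "is_filter (principal_filter x)"
  by (auto simp: is_filter_def)

definition filter_join :: "'a::boolean_algebra set \<Rightarrow> 'a set \<Rightarrow> 'a set" where
  "filter_join E G = {x. \<exists>e\<in>E. \<exists>g\<in>G. inf e g \<le> x}"

lemma is_filter_filter_join:
  assumes E: "is_filter E" and G: "is_filter G"
  shows "is_filter (filter_join E G)"
  unfolding is_filter_def filter_join_def mem_Collect_eq
proof (intro conjI allI impI)
  show "\<exists>e\<in>E. \<exists>g\<in>G. inf e g \<le> top"
    using filter_top[OF E] filter_top[OF G] top_greatest by blast
next
  fix x y assume "\<exists>e\<in>E. \<exists>g\<in>G. inf e g \<le> x" "x \<le> y"
  then show "\<exists>e\<in>E. \<exists>g\<in>G. inf e g \<le> y" by (meson order_trans)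
next
  fix x y assume "\<exists>e\<in>E. \<exists>g\<in>G. inf e g \<le> x" "\<exists>e\<in>E. \<exists>g\<in>G. inf e g \<le> y"
  then obtain e g e' g' where "e \<in> E" "g \<in> G" "inf e g \<le> x"
    and "e' \<in> E" "g' \<in> G" "inf e' g' \<le> y" by blast
  moreover have "inf (inf e e') (inf g g') \<le> inf (inf e g) (inf e' g')"
    by (simp add: inf_aci)
  ultimately show "\<exists>e\<in>E. \<exists>g\<in>G. inf e g \<le> inf x y"
    by (meson E G filter_inf inf_mono order_trans)
qed

lemma filter_join_upper1: "is_filter G \<Longrightarrow> E \<subseteq> filter_join E G"
  unfolding filter_join_def using filter_top inf_le1 by blast

lemma filter_join_upper2: "is_filter E \<Longrightarrow> G \<subseteq> filter_join E G"
  unfolding filter_join_def using filter_top inf_le2 by blast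

lemma filter_join_least:
  "is_filter H \<Longrightarrow> E \<subseteq> H \<Longrightarrow> G \<subseteq> H \<Longrightarrow> filter_join E G \<subseteq> H"
  unfolding filter_join_def by (blast intro: filter_up filter_inf)

lemma mem_filter_join_principal:
  "x \<in> filter_join M (principal_filter y) \<longleftrightarrow> (\<exists>m\<in>M. inf m y \<le> x)"
proof
  assume "x \<in> filter_join M (principal_filter y)"
  then obtain m g where "m \<in> M" "y \<le> g" "inf m g \<le> x"
    unfolding filter_join_def by auto
  then show "\<exists>m\<in>M. inf m y \<le> x"
    by (meson inf_mono order_refl order_trans)
qed (force simp: filter_join_def)

lemma le_by_compl_cases:
  fixes a m m' y :: "'a::boolean_algebra"
  assumes "inf m y \<le> a" "inf m' (- y) \<le> a"
  shows "inf m m' \<le> a"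
proof -
  have "m \<le> sup (- y) a" "m' \<le> sup y a"
    using assms by (simp_all add: shunt1 shunt2)
  then have "inf m m' \<le> inf (sup (- y) a) (sup y a)"
    by (blast intro: le_infI le_infI1 le_infI2)
  also have "\<dots> = a"
    by (simp add: sup_inf_distrib2[symmetric])
  finally show ?thesis .
qed

lemma filter_maximal_avoiding_prime:
  assumes M: "is_filter M" and a: "a \<notin> M"
    and maximal: "\<And>G. is_filter G \<Longrightarrow> M \<subseteq> G \<Longrightarrow> a \<notin> G \<Longrightarrow> G = M"
  shows "y \<in> M \<or> - y \<in> M"
proof (rule ccontr)
  assume "\<not> (y \<in> M \<or> - y \<in> M)"
  have a_generated: "\<exists>m\<in>M. inf m z \<le> a" if "z \<notin> M" for z
  proof -
    let ?G = "filter_join M (principal_filter z)"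
    have "is_filter ?G"
      using M is_filter_principal_filter by (rule is_filter_filter_join)
    moreover have "M \<subseteq> ?G"
      using is_filter_principal_filter by (rule filter_join_upper1)
    moreover have "z \<in> ?G"
      using filter_join_upper2[OF M, of "principal_filter z"] by auto
    ultimately have "a \<in> ?G"
      using maximal that by blast
    then show ?thesis
      using mem_filter_join_principal by blast
  qed
  obtain m m' where "m \<in> M" "inf m y \<le> a" "m' \<in> M" "inf m' (- y) \<le> a"
    using a_generated \<open>\<not> (y \<in> M \<or> - y \<in> M)\<close> by blast
  then have "inf m m' \<in> M" "inf m m' \<le> a"
    using filter_inf[OF M] le_by_compl_cases by blast+
  then show False
    using filter_up[OF M] a by blast
qed

lemma is_filter_Union_chain:
  assumes "C \<noteq> {}" "\<forall>G\<in>C. is_filter G" "\<forall>G\<in>C. \<forall>H\<in>C. G \<subseteq> H \<or> H \<subseteq> G"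
  shows "is_filter (\<Union>C)"
  unfolding is_filter_def
proof (intro conjI allI impI)
  show "top \<in> \<Union>C" using assms(1,2) filter_top by blast
next
  fix x y assume "x \<in> \<Union>C" "x \<le> y"
  then show "y \<in> \<Union>C" using assms(2) filter_up by blast
next
  fix x y assume "x \<in> \<Union>C" "y \<in> \<Union>C"
  then obtain G H where "G \<in> C" "H \<in> C" "x \<in> G" "y \<in> H" by blast
  with assms(2,3) show "inf x y \<in> \<Union>C" by (metis UnionI filter_inf subsetD)
qed

lemma ultrafilter_exists_avoiding:
  assumes F: "is_filter F" and a: "a \<notin> F"
  shows "\<exists>u. ultrafilter u \<and> F \<subseteq> u \<and> a \<notin> u"
proof -
  define A where "A = {G. is_filter G \<and> F \<subseteq> G \<and> a \<notin> G}"
  have "\<exists>U\<in>A. \<forall>G\<in>C. G \<subseteq> U" if C: "C \<in> chains A" for C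
  proof (cases "C = {}")
    case True
    then show ?thesis using F a unfolding A_def by blast
  next
    case False
    have "C \<subseteq> A" "\<forall>G\<in>C. \<forall>H\<in>C. G \<subseteq> H \<or> H \<subseteq> G"
      using C unfolding chains_def chain_subset_def by blast+
    with False have "\<Union>C \<in> A"
      unfolding A_def using is_filter_Union_chain[of C] by blast
    then show ?thesis by blast
  qed
  then obtain M where "M \<in> A" and maximal: "\<forall>G\<in>A. M \<subseteq> G \<longrightarrow> G = M"
    using Zorn_Lemma2[of A] by blast
  then have M: "is_filter M" "F \<subseteq> M" "a \<notin> M"
    unfolding A_def by auto
  have prime: "y \<in> M \<or> - y \<in> M" for y
  proof (rule filter_maximal_avoiding_prime[OF M(1,3)])
    fix G assume "is_filter G" "M \<subseteq> G" "a \<notin> G"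
    with M(2) maximal show "G = M" unfolding A_def by blast
  qed
  have "bot \<notin> M"
    using M filter_up bot_least by blast
  moreover have "G \<subseteq> M" if G: "is_filter G" "bot \<notin> G" "M \<subseteq> G" for G
  proof
    fix y assume "y \<in> G"
    have "- y \<notin> G"
      using filter_inf[OF G(1) \<open>y \<in> G\<close>, of "- y"] G(2) by auto
    with prime[of y] G(3) show "y \<in> M" by blast
  qed
  ultimately have "ultrafilter M"
    unfolding ultrafilter_def using M(1) by blast
  with M show ?thesis by blast
qed

lemma ultrafilter_is_filter: "ultrafilter u \<Longrightarrow> is_filter u"
  by (simp add: ultrafilter_def)

lemma ultrafilter_compl_iff:
  assumes u: "ultrafilter u"
  shows "- x \<in> u \<longleftrightarrow> x \<notin> u"
proof -
  have "x \<in> u \<or> - x \<in> u"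
    using u filter_maximal_avoiding_prime[of u bot] unfolding ultrafilter_def by blast
  moreover have "\<not> (x \<in> u \<and> - x \<in> u)"
    using u filter_inf[of u x "- x"] unfolding ultrafilter_def by auto
  ultimately show ?thesis by blast
qed

lemma le_ultrafilterI:
  assumes "\<And>u. ultrafilter u \<Longrightarrow> x \<in> u \<Longrightarrow> y \<in> u"
  shows "x \<le> y"
proof (rule ccontr)
  assume "\<not> x \<le> y"
  then obtain u where "ultrafilter u" "principal_filter x \<subseteq> u" "y \<notin> u"
    using ultrafilter_exists_avoiding[OF is_filter_principal_filter, of y x] by auto
  with assms show False by auto
qed

lemma mem_Ul [simp]: "u \<in> Ul \<longleftrightarrow> ultrafilter u"
  by (simp add: Ul_def)

section \<open>Closed subsets of the Stone space\<close>

lemma mem_phi: "w \<in> phi F \<longleftrightarrow> ultrafilter w \<and> F \<subseteq> w"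
  by (simp add: phi_def)

lemma phi_subset_iff:
  assumes "is_filter F" "is_filter H"
  shows "phi H \<subseteq> phi F \<longleftrightarrow> F \<subseteq> H"
proof
  assume sub: "phi H \<subseteq> phi F"
  show "F \<subseteq> H"
  proof
    fix x assume "x \<in> F"
    show "x \<in> H"
    proof (rule ccontr)
      assume "x \<notin> H"
      then obtain w where "ultrafilter w" "H \<subseteq> w" "x \<notin> w"
        using ultrafilter_exists_avoiding[OF assms(2)] by blast
      then have "w \<in> phi F"
        using sub mem_phi by blast
      with \<open>x \<in> F\<close> \<open>x \<notin> w\<close> show False
        by (auto simp: mem_phi)
    qed
  qed
qed (unfold phi_def, blast)

lemma phi_inject:
  assumes "is_filter F" "is_filter G" "phi F = phi G"
  shows "F = G"
  using phi_subset_iff[OF assms(1,2)] phi_subset_iff[OF assms(2,1)] assms(3) by blast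

lemma phi_ultrafilter:
  assumes u: "ultrafilter u"
  shows "phi u = {u}"
proof -
  have "w = u" if "ultrafilter w" "u \<subseteq> w" for w
    using u that unfolding ultrafilter_def by blast
  with u show ?thesis
    unfolding phi_def by blast
qed

lemma phi_principal_filter: "phi (principal_filter c) = {w. ultrafilter w \<and> c \<in> w}"
proof -
  have "principal_filter c \<subseteq> w \<longleftrightarrow> c \<in> w" if "ultrafilter w" for w
    using filter_up[OF ultrafilter_is_filter[OF that]] by auto
  then show ?thesis by (auto simp: mem_phi)
qed

lemma phi_filter_join:
  assumes "is_filter E" "is_filter G"
  shows "phi (filter_join E G) = phi E \<inter> phi G"
proof -
  have "filter_join E G \<subseteq> w \<longleftrightarrow> E \<subseteq> w \<and> G \<subseteq> w" if "ultrafilter w" for w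
    using filter_join_upper1[OF assms(2)] filter_join_upper2[OF assms(1)]
      filter_join_least[OF ultrafilter_is_filter[OF that]] by blast
  then show ?thesis
    unfolding phi_def by blast
qed

lemma Ul_eq_phi_top: "Ul = phi (principal_filter top)"
  by (auto simp: Ul_def phi_principal_filter dest: ultrafilter_is_filter filter_top)

lemma closed_Ul_phi: "is_filter F \<Longrightarrow> closed_Ul (phi F)"
  unfolding closed_Ul_def by blast

lemma closed_UlE:
  assumes "closed_Ul Y"
  obtains G where "is_filter G" "Y = phi G"
  using assms unfolding closed_Ul_def by blast

section \<open>The relation T_A and the correspondences\<close>

lemma TA_phi_iff:
  assumes "is_filter F"
  shows "TA imp u (phi F) v \<longleftrightarrow> Dimp imp u F \<subseteq> v"
  unfolding TA_def using phi_inject[OF assms] assms by blast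

lemma TA_singleton_iff: "ultrafilter v \<Longrightarrow> TA imp u {v} w \<longleftrightarrow> Dimp imp u v \<subseteq> w"
  using TA_phi_iff[OF ultrafilter_is_filter] phi_ultrafilter by metis

lemma TAset_Ul: "TAset imp u Ul = phi (Dimp imp u (principal_filter top))"
  unfolding TAset_def Ul_eq_phi_top TA_phi_iff[OF is_filter_principal_filter]
  by (auto simp: mem_phi)

lemma mem_Dimp_if_imp_top: "is_filter G \<Longrightarrow> imp top x \<in> u \<Longrightarrow> x \<in> Dimp imp u G"
  unfolding Dimp_def using filter_top by blast

locale cond_algebra =
  fixes imp :: "'a::boolean_algebra \<Rightarrow> 'a \<Rightarrow> 'a"
  assumes conditional_algebra: "conditional_algebra imp"
begin

lemma imp_top: "imp a top = top"
  and imp_inf: "inf (imp a b) (imp a c) = imp a (inf b c)"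
  and imp_sup_le: "imp (sup a b) c \<le> inf (imp a c) (imp b c)"
  using conditional_algebra by (simp_all add: conditional_algebra_def)

lemma imp_mono: "b \<le> c \<Longrightarrow> imp a b \<le> imp a c"
  by (metis imp_inf inf.absorb_iff1 inf.orderI)

lemma imp_antimono: "a \<le> a' \<Longrightarrow> imp a' b \<le> imp a b"
  by (metis imp_sup_le le_inf_iff sup.absorb2)

lemma is_filter_Dimp:
  assumes u: "is_filter u" and F: "is_filter F"
  shows "is_filter (Dimp imp u F)"
  unfolding is_filter_def
proof (intro conjI allI impI)
  show "top \<in> Dimp imp u F"
    using mem_Dimp_if_imp_top[OF F] imp_top filter_top[OF u] by simp
next
  fix x y assume "x \<in> Dimp imp u F" "x \<le> y"
  then show "y \<in> Dimp imp u F"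
    unfolding Dimp_def using imp_mono filter_up[OF u] by blast
next
  fix x y assume "x \<in> Dimp imp u F" "y \<in> Dimp imp u F"
  then obtain a a' where "a \<in> F" "imp a x \<in> u" "a' \<in> F" "imp a' y \<in> u"
    unfolding Dimp_def by blast
  then have "imp (inf a a') x \<in> u" "imp (inf a a') y \<in> u"
    using imp_antimono filter_up[OF u] by (meson inf_le1 inf_le2)+
  then have "imp (inf a a') (inf x y) \<in> u"
    using filter_inf[OF u] imp_inf by metis
  with \<open>a \<in> F\<close> \<open>a' \<in> F\<close> show "inf x y \<in> Dimp imp u F"
    unfolding Dimp_def using filter_inf[OF F] by blast
qed

lemma Dimp_principal_filter:
  "is_filter u \<Longrightarrow> Dimp imp u (principal_filter c) = {y. imp c y \<in> u}"
  unfolding Dimp_def using imp_antimono filter_up by fastforce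

lemma TA_principal_iff:
  "is_filter u \<Longrightarrow> TA imp u (phi (principal_filter c)) v \<longleftrightarrow> (\<forall>y. imp c y \<in> u \<longrightarrow> y \<in> v)"
  by (auto simp: TA_phi_iff[OF is_filter_principal_filter] Dimp_principal_filter)

lemma imp_mem_ultrafilterI:
  assumes u: "ultrafilter u"
    and "\<And>v. ultrafilter v \<Longrightarrow> TA imp u (phi (principal_filter c)) v \<Longrightarrow> x \<in> v"
  shows "imp c x \<in> u"
proof (rule ccontr)
  let ?D = "Dimp imp u (principal_filter c)"
  have uf: "is_filter u"
    using u by (rule ultrafilter_is_filter)
  assume "imp c x \<notin> u"
  then have "x \<notin> ?D"
    using Dimp_principal_filter[OF uf] by simp
  then obtain v where "ultrafilter v" "?D \<subseteq> v" "x \<notin> v"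
    using ultrafilter_exists_avoiding is_filter_Dimp[OF uf is_filter_principal_filter] by blast
  with assms(2) show False
    using TA_phi_iff[OF is_filter_principal_filter] by blast
qed

lemma A4_Dimp_subset:
  assumes axiom: "\<And>a b c. imp a b \<le> imp c (imp a b)"
    and u: "is_filter u" and G: "is_filter G"
    and uv: "Dimp imp u G \<subseteq> v" and vw: "Dimp imp v F \<subseteq> w"
  shows "Dimp imp u F \<subseteq> w"
proof
  fix b assume "b \<in> Dimp imp u F"
  then obtain a where "a \<in> F" "imp a b \<in> u"
    unfolding Dimp_def by blast
  moreover have "imp a b \<le> imp top (imp a b)"
    by (rule axiom)
  ultimately have "imp top (imp a b) \<in> u"
    using filter_up[OF u] by blast
  then have "imp a b \<in> v"
    using uv mem_Dimp_if_imp_top[OF G] by blast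
  with \<open>a \<in> F\<close> vw show "b \<in> w"
    unfolding Dimp_def by blast
qed

lemma correspondence_A4:
  "(\<forall>a b c. imp a b \<le> imp c (imp a b)) \<longleftrightarrow>
   (\<forall>u\<in>Ul. \<forall>v\<in>Ul. \<forall>w\<in>Ul. \<forall>Y Z. closed_Ul Y \<longrightarrow> closed_Ul Z \<longrightarrow>
      TA imp u Y v \<longrightarrow> TA imp v Z w \<longrightarrow> TA imp u Z w)"
  (is "?axiom \<longleftrightarrow> ?frame")
proof
  assume axiom: ?axiom
  show ?frame
  proof (intro ballI allI impI)
    fix u v w Y Z
    assume "u \<in> Ul" "closed_Ul Y" "closed_Ul Z" "TA imp u Y v" "TA imp v Z w"
    obtain G where "is_filter G" "Y = phi G"
      using \<open>closed_Ul Y\<close> by (rule closed_UlE)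
    obtain F where "is_filter F" "Z = phi F"
      using \<open>closed_Ul Z\<close> by (rule closed_UlE)
    have uv: "Dimp imp u G \<subseteq> v" and vw: "Dimp imp v F \<subseteq> w"
      using \<open>TA imp u Y v\<close> \<open>TA imp v Z w\<close> \<open>Y = phi G\<close> \<open>Z = phi F\<close>
        TA_phi_iff[OF \<open>is_filter G\<close>] TA_phi_iff[OF \<open>is_filter F\<close>] by simp_all
    have "is_filter u"
      using \<open>u \<in> Ul\<close> by (simp add: ultrafilter_is_filter)
    from this \<open>is_filter G\<close> uv vw have "Dimp imp u F \<subseteq> w"
      by (rule A4_Dimp_subset[OF axiom[rule_format]])
    with \<open>is_filter F\<close> \<open>Z = phi F\<close> show "TA imp u Z w"
      by (simp add: TA_phi_iff)
  qed
next
  assume frame: ?frame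
  show ?axiom
  proof (intro allI le_ultrafilterI)
    fix a b c u assume u: "ultrafilter u" "imp a b \<in> u"
    show "imp c (imp a b) \<in> u"
    proof (rule imp_mem_ultrafilterI[OF u(1)])
      fix v assume v: "ultrafilter v" "TA imp u (phi (principal_filter c)) v"
      show "imp a b \<in> v"
      proof (rule imp_mem_ultrafilterI[OF v(1)])
        fix w assume w: "ultrafilter w" "TA imp v (phi (principal_filter a)) w"
        have "TA imp u (phi (principal_filter a)) w"
          using frame u(1) v w closed_Ul_phi[OF is_filter_principal_filter] mem_Ul by blast
        with u show "b \<in> w"
          by (simp add: TA_principal_iff ultrafilter_is_filter)
      qed
    qed
  qed
qed

lemma correspondence_A5:
  "(\<forall>a b. inf a (imp a b) \<le> b) \<longleftrightarrow> (\<forall>u\<in>Ul. TA imp u {u} u)"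
proof
  assume axiom: "\<forall>a b. inf a (imp a b) \<le> b"
  have "Dimp imp u u \<subseteq> u" if "is_filter u" for u
    unfolding Dimp_def using axiom filter_inf[OF that] filter_up[OF that] by blast
  then show "\<forall>u\<in>Ul. TA imp u {u} u"
    by (simp add: TA_singleton_iff ultrafilter_is_filter)
next
  assume frame: "\<forall>u\<in>Ul. TA imp u {u} u"
  show "\<forall>a b. inf a (imp a b) \<le> b"
  proof (intro allI le_ultrafilterI)
    fix a b u assume u: "ultrafilter u" "inf a (imp a b) \<in> u"
    then have "a \<in> u" "imp a b \<in> u"
      by (simp_all add: filter_inf_iff ultrafilter_is_filter)
    moreover have "Dimp imp u u \<subseteq> u"
      using frame u(1) by (simp add: TA_singleton_iff)
    ultimately show "b \<in> u"
      unfolding Dimp_def by blast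
  qed
qed

lemma A6_extension_exists:
  assumes axiom: "\<And>a b. imp a b \<le> imp (- b) (- a)"
    and u: "ultrafilter u" and v: "ultrafilter v"
    and G: "is_filter G" and uv: "Dimp imp u G \<subseteq> v"
  shows "\<exists>w. ultrafilter w \<and> G \<subseteq> w \<and> Dimp imp u v \<subseteq> w"
proof -
  let ?D = "Dimp imp u v"
  have D: "is_filter ?D"
    using u v by (simp add: is_filter_Dimp ultrafilter_is_filter)
  have "bot \<notin> filter_join G ?D"
  proof
    assume "bot \<in> filter_join G ?D"
    then obtain g d where "g \<in> G" "d \<in> ?D" "inf g d \<le> bot"
      unfolding filter_join_def by blast
    then have "g \<le> - d"
      by (simp add: bot_unique inf_shunt)
    with \<open>g \<in> G\<close> have "- d \<in> G"
      by (rule filter_up[OF G])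
    obtain a where "a \<in> v" "imp a d \<in> u"
      using \<open>d \<in> ?D\<close> unfolding Dimp_def by blast
    with \<open>- d \<in> G\<close> have "- a \<in> Dimp imp u G"
      unfolding Dimp_def using axiom filter_up[OF ultrafilter_is_filter[OF u]] by blast
    with uv \<open>a \<in> v\<close> show False
      using ultrafilter_compl_iff[OF v] by blast
  qed
  then obtain w where "ultrafilter w" "filter_join G ?D \<subseteq> w"
    using ultrafilter_exists_avoiding is_filter_filter_join[OF G D] by blast
  with filter_join_upper1[OF D] filter_join_upper2[OF G] show ?thesis
    by blast
qed

lemma correspondence_A6:
  "(\<forall>a b. imp a b \<le> imp (- b) (- a)) \<longleftrightarrow>
   (\<forall>u\<in>Ul. \<forall>v\<in>Ul. \<forall>Y. closed_Ul Y \<longrightarrow> TA imp u Y v \<longrightarrow> (\<exists>w\<in>Y. TA imp u {v} w))"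
  (is "?axiom \<longleftrightarrow> ?frame")
proof
  assume axiom: ?axiom
  show ?frame
  proof (intro ballI allI impI)
    fix u v Y assume "u \<in> Ul" "v \<in> Ul" "closed_Ul Y" "TA imp u Y v"
    obtain G where G: "is_filter G" "Y = phi G"
      using \<open>closed_Ul Y\<close> by (rule closed_UlE)
    with \<open>TA imp u Y v\<close> have uv: "Dimp imp u G \<subseteq> v"
      by (simp add: TA_phi_iff)
    moreover have "ultrafilter u" "ultrafilter v"
      using \<open>u \<in> Ul\<close> \<open>v \<in> Ul\<close> by simp_all
    ultimately obtain w where "ultrafilter w" "G \<subseteq> w" "Dimp imp u v \<subseteq> w"
      using A6_extension_exists[OF axiom[rule_format] _ _ G(1)] by blast
    with G(2) have "w \<in> Y"
      by (simp add: mem_phi)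
    with \<open>v \<in> Ul\<close> \<open>Dimp imp u v \<subseteq> w\<close> show "\<exists>w\<in>Y. TA imp u {v} w"
      by (auto simp: TA_singleton_iff)
  qed
next
  assume frame: ?frame
  show ?axiom
  proof (intro allI le_ultrafilterI)
    fix a b u assume u: "ultrafilter u" "imp a b \<in> u"
    show "imp (- b) (- a) \<in> u"
    proof (rule imp_mem_ultrafilterI[OF u(1)])
      fix v assume v: "ultrafilter v" "TA imp u (phi (principal_filter (- b))) v"
      show "- a \<in> v"
      proof (rule ccontr)
        assume "- a \<notin> v"
        then have "b \<in> Dimp imp u v"
          unfolding Dimp_def using u(2) ultrafilter_compl_iff[OF v(1)] by blast
        obtain w where "w \<in> phi (principal_filter (- b))" "TA imp u {v} w"
          using frame u(1) v closed_Ul_phi[OF is_filter_principal_filter] mem_Ul by blast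
        with \<open>b \<in> Dimp imp u v\<close> v(1) show False
          using ultrafilter_compl_iff by (auto simp: TA_singleton_iff phi_principal_filter)
      qed
    qed
  qed
qed

lemma A7_Dimp_subset:
  assumes axiom: "\<And>a b c. - imp a b \<le> imp c (- imp a b)"
    and u: "ultrafilter u" and v: "ultrafilter v" and G: "is_filter G"
    and uv: "Dimp imp u G \<subseteq> v" and uw: "Dimp imp u F \<subseteq> w"
  shows "Dimp imp v F \<subseteq> w"
proof
  fix b assume "b \<in> Dimp imp v F"
  then obtain a where "a \<in> F" "imp a b \<in> v"
    unfolding Dimp_def by blast
  show "b \<in> w"
  proof (rule ccontr)
    assume "b \<notin> w"
    with \<open>a \<in> F\<close> uw have "- imp a b \<in> u"
      unfolding Dimp_def using ultrafilter_compl_iff[OF u] by blast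
    moreover have "- imp a b \<le> imp top (- imp a b)"
      by (rule axiom)
    ultimately have "imp top (- imp a b) \<in> u"
      using filter_up[OF ultrafilter_is_filter[OF u]] by blast
    then have "- imp a b \<in> v"
      using uv mem_Dimp_if_imp_top[OF G] by blast
    with \<open>imp a b \<in> v\<close> show False
      using ultrafilter_compl_iff[OF v] by blast
  qed
qed

lemma correspondence_A7:
  "(\<forall>a b c. - imp a b \<le> imp c (- imp a b)) \<longleftrightarrow>
   (\<forall>u\<in>Ul. \<forall>v\<in>Ul. \<forall>w\<in>Ul. \<forall>Y Z. closed_Ul Y \<longrightarrow> closed_Ul Z \<longrightarrow>
      TA imp u Y v \<longrightarrow> TA imp u Z w \<longrightarrow> TA imp v Z w)"
  (is "?axiom \<longleftrightarrow> ?frame")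
proof
  assume axiom: ?axiom
  show ?frame
  proof (intro ballI allI impI)
    fix u v w Y Z
    assume "u \<in> Ul" "v \<in> Ul" "closed_Ul Y" "closed_Ul Z" "TA imp u Y v" "TA imp u Z w"
    obtain G where "is_filter G" "Y = phi G"
      using \<open>closed_Ul Y\<close> by (rule closed_UlE)
    obtain F where "is_filter F" "Z = phi F"
      using \<open>closed_Ul Z\<close> by (rule closed_UlE)
    have uv: "Dimp imp u G \<subseteq> v" and uw: "Dimp imp u F \<subseteq> w"
      using \<open>TA imp u Y v\<close> \<open>TA imp u Z w\<close> \<open>Y = phi G\<close> \<open>Z = phi F\<close>
        TA_phi_iff[OF \<open>is_filter G\<close>] TA_phi_iff[OF \<open>is_filter F\<close>] by simp_all
    have "ultrafilter u" "ultrafilter v"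
      using \<open>u \<in> Ul\<close> \<open>v \<in> Ul\<close> by simp_all
    from this \<open>is_filter G\<close> uv uw have "Dimp imp v F \<subseteq> w"
      by (rule A7_Dimp_subset[OF axiom[rule_format]])
    with \<open>is_filter F\<close> \<open>Z = phi F\<close> show "TA imp v Z w"
      by (simp add: TA_phi_iff)
  qed
next
  assume frame: ?frame
  show ?axiom
  proof (intro allI le_ultrafilterI)
    fix a b c u assume u: "ultrafilter u" "- imp a b \<in> u"
    show "imp c (- imp a b) \<in> u"
    proof (rule imp_mem_ultrafilterI[OF u(1)])
      fix v assume v: "ultrafilter v" "TA imp u (phi (principal_filter c)) v"
      show "- imp a b \<in> v"
      proof (rule ccontr)
        assume "- imp a b \<notin> v"
        then have "imp a b \<in> v"
          using ultrafilter_compl_iff[OF v(1)] by blast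
        have "imp a b \<notin> u"
          using u ultrafilter_compl_iff by blast
        then obtain w where w: "ultrafilter w" "TA imp u (phi (principal_filter a)) w" "b \<notin> w"
          using imp_mem_ultrafilterI[OF u(1)] by blast
        then have "TA imp v (phi (principal_filter a)) w"
          using frame u(1) v closed_Ul_phi[OF is_filter_principal_filter] mem_Ul by blast
        with \<open>imp a b \<in> v\<close> w(3) v(1) show False
          by (simp add: TA_principal_iff ultrafilter_is_filter)
      qed
    qed
  qed
qed

lemma A8_Dimp_subset:
  assumes axiom: "\<And>a b c. inf (imp top (sup (- a) b)) (imp b c) \<le> imp a c"
    and u: "is_filter u" and G: "is_filter G"
    and F_sub: "F \<subseteq> filter_join (Dimp imp u (principal_filter top)) G"
  shows "Dimp imp u F \<subseteq> Dimp imp u G"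
proof
  fix x assume "x \<in> Dimp imp u F"
  then obtain f where "f \<in> F" "imp f x \<in> u"
    unfolding Dimp_def by blast
  then obtain e g where "imp top e \<in> u" "g \<in> G" "inf e g \<le> f"
    using F_sub Dimp_principal_filter[OF u] unfolding filter_join_def by blast
  then have "imp top (sup (- g) f) \<in> u"
    using filter_up[OF u] imp_mono by (metis shunt1)
  with \<open>imp f x \<in> u\<close> have "inf (imp top (sup (- g) f)) (imp f x) \<in> u"
    using filter_inf[OF u] by blast
  then have "imp g x \<in> u"
    using axiom filter_up[OF u] by blast
  with \<open>g \<in> G\<close> show "x \<in> Dimp imp u G"
    unfolding Dimp_def by blast
qed

lemma correspondence_A8:
  "(\<forall>a b c. inf (imp top (sup (- a) b)) (imp b c) \<le> imp a c) \<longleftrightarrow>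
   (\<forall>u\<in>Ul. \<forall>v\<in>Ul. \<forall>Y Z. closed_Ul Y \<longrightarrow> closed_Ul Z \<longrightarrow>
      TA imp u Y v \<longrightarrow> TAset imp u Ul \<inter> Y \<subseteq> Z \<longrightarrow> TA imp u Z v)"
  (is "?axiom \<longleftrightarrow> ?frame")
proof
  assume axiom: ?axiom
  show ?frame
  proof (intro ballI allI impI)
    fix u v Y Z
    assume "u \<in> Ul" "closed_Ul Y" "closed_Ul Z" "TA imp u Y v" and YZ: "TAset imp u Ul \<inter> Y \<subseteq> Z"
    obtain G where G: "is_filter G" "Y = phi G"
      using \<open>closed_Ul Y\<close> by (rule closed_UlE)
    obtain F where F: "is_filter F" "Z = phi F"
      using \<open>closed_Ul Z\<close> by (rule closed_UlE)
    have uv: "Dimp imp u G \<subseteq> v"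
      using \<open>TA imp u Y v\<close> G by (simp add: TA_phi_iff)
    have u: "is_filter u"
      using \<open>u \<in> Ul\<close> by (simp add: ultrafilter_is_filter)
    let ?E = "Dimp imp u (principal_filter top)"
    have E: "is_filter ?E"
      using u is_filter_principal_filter by (rule is_filter_Dimp)
    have "phi (filter_join ?E G) \<subseteq> phi F"
      using YZ G(2) F(2) by (simp add: TAset_Ul phi_filter_join[OF E G(1)])
    then have F_sub: "F \<subseteq> filter_join ?E G"
      using phi_subset_iff[OF F(1) is_filter_filter_join[OF E G(1)]] by blast
    have "Dimp imp u F \<subseteq> v"
      using A8_Dimp_subset[OF axiom[rule_format] u G(1) F_sub] uv by blast
    with F show "TA imp u Z v"
      by (simp add: TA_phi_iff)
  qed
next
  assume frame: ?frame
  show ?axiom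
  proof (intro allI le_ultrafilterI)
    fix a b c u assume u: "ultrafilter u" "inf (imp top (sup (- a) b)) (imp b c) \<in> u"
    then have "imp top (sup (- a) b) \<in> u" "imp b c \<in> u"
      by (simp_all add: filter_inf_iff ultrafilter_is_filter)
    show "imp a c \<in> u"
    proof (rule imp_mem_ultrafilterI[OF u(1)])
      fix v assume v: "ultrafilter v" "TA imp u (phi (principal_filter a)) v"
      have "TAset imp u Ul \<inter> phi (principal_filter a) \<subseteq> phi (principal_filter b)"
      proof
        fix w assume "w \<in> TAset imp u Ul \<inter> phi (principal_filter a)"
        then have w: "ultrafilter w" "sup (- a) b \<in> w" "a \<in> w"
          using \<open>imp top (sup (- a) b) \<in> u\<close>
          by (auto simp: TAset_Ul mem_phi Dimp_principal_filter ultrafilter_is_filter u(1)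
              phi_principal_filter)
        then have "inf a (sup (- a) b) \<in> w"
          using filter_inf ultrafilter_is_filter by blast
        then have "b \<in> w"
          using filter_inf_iff[OF ultrafilter_is_filter[OF w(1)]] by (simp add: inf_sup_distrib1)
        with w(1) show "w \<in> phi (principal_filter b)"
          by (simp add: phi_principal_filter)
      qed
      then have "TA imp u (phi (principal_filter b)) v"
        using frame u(1) v closed_Ul_phi[OF is_filter_principal_filter] mem_Ul by blast
      with \<open>imp b c \<in> u\<close> u(1) show "c \<in> v"
        by (simp add: TA_principal_iff ultrafilter_is_filter)
    qed
  qed
qed

end

theorem theorem9p6:
  fixes imp :: "'a::boolean_algebra \<Rightarrow> 'a \<Rightarrow> 'a"
  assumes "conditional_algebra imp"
  shows
   "((\<forall>a b c. imp a b \<le> imp c (imp a b)) \<longleftrightarrow>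
      (\<forall>u\<in>Ul. \<forall>v\<in>Ul. \<forall>w\<in>Ul. \<forall>Y Z. closed_Ul Y \<longrightarrow> closed_Ul Z \<longrightarrow>
         TA imp u Y v \<longrightarrow> TA imp v Z w \<longrightarrow> TA imp u Z w))
    \<and> ((\<forall>a b. inf a (imp a b) \<le> b) \<longleftrightarrow> (\<forall>u\<in>Ul. TA imp u {u} u))
    \<and> ((\<forall>a b. imp a b \<le> imp (- b) (- a)) \<longleftrightarrow>
      (\<forall>u\<in>Ul. \<forall>v\<in>Ul. \<forall>Y. closed_Ul Y \<longrightarrow> TA imp u Y v \<longrightarrow>
         (\<exists>w\<in>Y. TA imp u {v} w)))
    \<and> ((\<forall>a b c. - imp a b \<le> imp c (- imp a b)) \<longleftrightarrow>
      (\<forall>u\<in>Ul. \<forall>v\<in>Ul. \<forall>w\<in>Ul. \<forall>Y Z. closed_Ul Y \<longrightarrow> closed_Ul Z \<longrightarrow>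
         TA imp u Y v \<longrightarrow> TA imp u Z w \<longrightarrow> TA imp v Z w))
    \<and> ((\<forall>a b c. inf (imp top (sup (- a) b)) (imp b c) \<le> imp a c) \<longleftrightarrow>
      (\<forall>u\<in>Ul. \<forall>v\<in>Ul. \<forall>Y Z. closed_Ul Y \<longrightarrow> closed_Ul Z \<longrightarrow>
         TA imp u Y v \<longrightarrow> TAset imp u Ul \<inter> Y \<subseteq> Z \<longrightarrow> TA imp u Z v))"
proof -
  interpret cond_algebra imp
    using assms by unfold_locales
  show ?thesis
    using correspondence_A4 correspondence_A5 correspondence_A6 correspondence_A7
      correspondence_A8
    by blast
qed

end
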